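(* Let $R:X\leftrightarrow\mathcal{P}Y$ and $S:Y\leftrightarrow\mathcal{P}Z$ be multirelations. Then (1) $(R\ast S)^{\downarrow}=R\ast S^{\downarrow}$, and hence $(R^{\downarrow}\ast S^{\downarrow})^{\downarrow}=R^{\downarrow}\ast S^{\downarrow}$; (2) if $R$ is inner deterministic, then $(R\ast S)^{\uparrow}=R\ast S^{\uparrow}=R^{\uparrow}\ast S^{\uparrow}$.
   Context: A multirelation $R:X\leftrightarrow\mathcal{P}Y$ is a subset of $X\times\mathcal{P}(Y)$. $R^{\uparrow}=\{(a,A)\mid\exists B.\ (a,B)\in R\wedge B\subseteq A\}$, $R^{\downarrow}=\{(a,A)\mid\exists B.\ (a,B)\in R\wedge A\subseteq B\}$. $R$ is inner deterministic if every $(a,B)\in R$ has $B$ a singleton. The Peleg composition is $R\ast S=\{(a,C)\mid\exists B.\ (a,B)\in R\wedge\exists f:Y\to\mathcal{P}Z.\ (\forall b\in B.\ (b,f(b))\in S)\wedge C=\bigcup_{b\in B}f(b)\}$. *)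

theory Defs
  imports Main
begin

type_synonym ('a, 'b) mrel = "('a \<times> 'b set) set"

definition up_closure :: "('a, 'b) mrel \<Rightarrow> ('a, 'b) mrel" where
  "up_closure R = {(a, A). \<exists>B. (a, B) \<in> R \<and> B \<subseteq> A}"

definition down_closure :: "('a, 'b) mrel \<Rightarrow> ('a, 'b) mrel" where
  "down_closure R = {(a, A). \<exists>B. (a, B) \<in> R \<and> A \<subseteq> B}"

definition inner_deterministic :: "('a, 'b) mrel \<Rightarrow> bool" where
  "inner_deterministic R \<longleftrightarrow> (\<forall>(a, B) \<in> R. \<exists>b. B = {b})"

definition peleg_comp :: "('a, 'b) mrel \<Rightarrow> ('b, 'c) mrel \<Rightarrow> ('a, 'c) mrel" where
  "peleg_comp R S = {(a, C). \<exists>B. (a, B) \<in> R \<and>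
      (\<exists>f :: 'b \<Rightarrow> 'c set. (\<forall>b \<in> B. (b, f b) \<in> S) \<and> C = (\<Union>b \<in> B. f b))}"

end

theory Submission
  imports Defs
begin

text \<open>For (1), a witness family f for \<open>(a, C) \<in> (R \<ast> S)\<^sup>\<down>\<close> is shrunk to
  \<open>\<lambda>b. f b \<inter> C\<close>. For (2), Peleg composition with \<open>S\<^sup>\<up>\<close> is already up-closed
  as soon as every image set of R is nonempty (enlarge the value of the witness
  family at one point), and enlarging an image set of R may only enlarge the
  result; inner determinism supplies the nonemptiness.\<close>

lemma mem_up_closure: "(a, A) \<in> up_closure R \<longleftrightarrow> (\<exists>B. (a, B) \<in> R \<and> B \<subseteq> A)"
  unfolding up_closure_def by simp

lemma mem_down_closure: "(a, A) \<in> down_closure R \<longleftrightarrow> (\<exists>B. (a, B) \<in> R \<and> A \<subseteq> B)"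
  unfolding down_closure_def by simp

lemma mem_peleg_comp:
  "(a, C) \<in> peleg_comp R S \<longleftrightarrow>
     (\<exists>B f. (a, B) \<in> R \<and> (\<forall>b \<in> B. (b, f b) \<in> S) \<and> C = (\<Union>b \<in> B. f b))"
  unfolding peleg_comp_def by simp

lemma peleg_compI:
  "(a, B) \<in> R \<Longrightarrow> (\<And>b. b \<in> B \<Longrightarrow> (b, f b) \<in> S) \<Longrightarrow> (a, \<Union>b \<in> B. f b) \<in> peleg_comp R S"
  unfolding mem_peleg_comp by blast

lemma subset_up_closure: "R \<subseteq> up_closure R"
  unfolding up_closure_def by blast

lemma up_closure_mono: "R \<subseteq> R' \<Longrightarrow> up_closure R \<subseteq> up_closure R'"
  unfolding up_closure_def by blast

lemma up_closure_idem: "up_closure (up_closure R) = up_closure R"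
  unfolding up_closure_def by blast

lemma down_closure_idem: "down_closure (down_closure R) = down_closure R"
  unfolding down_closure_def by blast

lemma peleg_comp_mono: "R \<subseteq> R' \<Longrightarrow> S \<subseteq> S' \<Longrightarrow> peleg_comp R S \<subseteq> peleg_comp R' S'"
  unfolding peleg_comp_def by blast

lemma down_closure_peleg_comp_subset: "down_closure (peleg_comp R S) \<subseteq> peleg_comp R (down_closure S)"
proof clarify
  fix a C
  assume "(a, C) \<in> down_closure (peleg_comp R S)"
  then obtain B f where B: "(a, B) \<in> R" and f: "\<forall>b \<in> B. (b, f b) \<in> S"
    and C: "C \<subseteq> (\<Union>b \<in> B. f b)"
    unfolding mem_down_closure mem_peleg_comp by blast
  have "(a, \<Union>b \<in> B. f b \<inter> C) \<in> peleg_comp R (down_closure S)"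
    using B f by (intro peleg_compI) (auto simp: mem_down_closure)
  moreover have "(\<Union>b \<in> B. f b \<inter> C) = C"
    using C by blast
  ultimately show "(a, C) \<in> peleg_comp R (down_closure S)"
    by simp
qed

lemma peleg_comp_down_closure_subset: "peleg_comp R (down_closure S) \<subseteq> down_closure (peleg_comp R S)"
proof clarify
  fix a C
  assume "(a, C) \<in> peleg_comp R (down_closure S)"
  then obtain B g where B: "(a, B) \<in> R" and g: "\<forall>b \<in> B. (b, g b) \<in> down_closure S"
    and C: "C = (\<Union>b \<in> B. g b)"
    unfolding mem_peleg_comp by blast
  obtain f where f: "\<forall>b \<in> B. (b, f b) \<in> S \<and> g b \<subseteq> f b"
    using g unfolding mem_down_closure by metis
  have "(a, \<Union>b \<in> B. f b) \<in> peleg_comp R S"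
    using B f by (intro peleg_compI) auto
  moreover have "C \<subseteq> (\<Union>b \<in> B. f b)"
    using C f by blast
  ultimately show "(a, C) \<in> down_closure (peleg_comp R S)"
    unfolding mem_down_closure by blast
qed

lemma down_closure_peleg_comp: "down_closure (peleg_comp R S) = peleg_comp R (down_closure S)"
  using down_closure_peleg_comp_subset peleg_comp_down_closure_subset by (rule subset_antisym)

lemma peleg_comp_up_closure_subset: "peleg_comp R (up_closure S) \<subseteq> up_closure (peleg_comp R S)"
proof clarify
  fix a C
  assume "(a, C) \<in> peleg_comp R (up_closure S)"
  then obtain B g where B: "(a, B) \<in> R" and g: "\<forall>b \<in> B. (b, g b) \<in> up_closure S"
    and C: "C = (\<Union>b \<in> B. g b)"
    unfolding mem_peleg_comp by blast
  obtain f where f: "\<forall>b \<in> B. (b, f b) \<in> S \<and> f b \<subseteq> g b"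
    using g unfolding mem_up_closure by metis
  have "(a, \<Union>b \<in> B. f b) \<in> peleg_comp R S"
    using B f by (intro peleg_compI) auto
  moreover have "(\<Union>b \<in> B. f b) \<subseteq> C"
    using C f by blast
  ultimately show "(a, C) \<in> up_closure (peleg_comp R S)"
    unfolding mem_up_closure by blast
qed

lemma up_closure_peleg_comp_up_closure:
  "up_closure (peleg_comp R (up_closure S)) = up_closure (peleg_comp R S)"
proof (rule subset_antisym)
  show "up_closure (peleg_comp R (up_closure S)) \<subseteq> up_closure (peleg_comp R S)"
    using up_closure_mono[OF peleg_comp_up_closure_subset] by (simp add: up_closure_idem)
  show "up_closure (peleg_comp R S) \<subseteq> up_closure (peleg_comp R (up_closure S))"
    by (intro up_closure_mono peleg_comp_mono subset_up_closure order_refl)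
qed

lemma peleg_comp_up_closure_left_subset: "peleg_comp (up_closure R) S \<subseteq> up_closure (peleg_comp R S)"
proof clarify
  fix a C
  assume "(a, C) \<in> peleg_comp (up_closure R) S"
  then obtain B' f where B': "(a, B') \<in> up_closure R" and f: "\<forall>b \<in> B'. (b, f b) \<in> S"
    and C: "C = (\<Union>b \<in> B'. f b)"
    unfolding mem_peleg_comp by blast
  obtain B where B: "(a, B) \<in> R" "B \<subseteq> B'"
    using B' unfolding mem_up_closure by blast
  have "(a, \<Union>b \<in> B. f b) \<in> peleg_comp R S"
    using B f by (intro peleg_compI) auto
  moreover have "(\<Union>b \<in> B. f b) \<subseteq> C"
    using B(2) C by blast
  ultimately show "(a, C) \<in> up_closure (peleg_comp R S)"
    unfolding mem_up_closure by blast
qed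

lemma up_closed_peleg_comp_up_closure:
  assumes nonempty: "\<And>a B. (a, B) \<in> R \<Longrightarrow> B \<noteq> {}"
  shows "up_closure (peleg_comp R (up_closure S)) = peleg_comp R (up_closure S)"
proof (rule subset_antisym[OF _ subset_up_closure], clarify)
  fix a C'
  assume "(a, C') \<in> up_closure (peleg_comp R (up_closure S))"
  then obtain B g where B: "(a, B) \<in> R" and g: "\<forall>b \<in> B. (b, g b) \<in> up_closure S"
    and C': "(\<Union>b \<in> B. g b) \<subseteq> C'"
    unfolding mem_up_closure mem_peleg_comp by blast
  obtain b0 where b0: "b0 \<in> B"
    using nonempty[OF B] by blast
  define g' where "g' = g(b0 := C')"
  have "(a, \<Union>b \<in> B. g' b) \<in> peleg_comp R (up_closure S)"
  proof (rule peleg_compI[OF B])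
    fix b
    assume b: "b \<in> B"
    show "(b, g' b) \<in> up_closure S"
    proof (cases "b = b0")
      case True
      obtain D where "(b0, D) \<in> S" "D \<subseteq> g b0"
        using g b0 unfolding mem_up_closure by blast
      moreover have "g b0 \<subseteq> C'"
        using b0 C' by blast
      ultimately show ?thesis
        unfolding True g'_def mem_up_closure by auto
    next
      case False
      then show ?thesis
        using g b unfolding g'_def by simp
    qed
  qed
  moreover have "(\<Union>b \<in> B. g' b) = C'"
    using b0 C' unfolding g'_def by auto
  ultimately show "(a, C') \<in> peleg_comp R (up_closure S)"
    by simp
qed

lemma inner_deterministic_nonempty: "inner_deterministic R \<Longrightarrow> (a, B) \<in> R \<Longrightarrow> B \<noteq> {}"
  unfolding inner_deterministic_def by blast

theorem lemma4p8:
  fixes R :: "('a, 'b) mrel" and S :: "('b, 'c) mrel"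
  shows "down_closure (peleg_comp R S) = peleg_comp R (down_closure S)
         \<and> down_closure (peleg_comp (down_closure R) (down_closure S))
             = peleg_comp (down_closure R) (down_closure S)
         \<and> (inner_deterministic R \<longrightarrow>
              up_closure (peleg_comp R S) = peleg_comp R (up_closure S)
            \<and> peleg_comp R (up_closure S) = peleg_comp (up_closure R) (up_closure S))"
proof (intro conjI impI)
  show "down_closure (peleg_comp R S) = peleg_comp R (down_closure S)"
    by (rule down_closure_peleg_comp)
  show "down_closure (peleg_comp (down_closure R) (down_closure S))
          = peleg_comp (down_closure R) (down_closure S)"
    by (simp add: down_closure_peleg_comp down_closure_idem)
  assume "inner_deterministic R"
  then have up_closed: "up_closure (peleg_comp R (up_closure S)) = peleg_comp R (up_closure S)"
    by (intro up_closed_peleg_comp_up_closure) (rule inner_deterministic_nonempty)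
  then show "up_closure (peleg_comp R S) = peleg_comp R (up_closure S)"
    by (simp add: up_closure_peleg_comp_up_closure)
  have "peleg_comp (up_closure R) (up_closure S) \<subseteq> peleg_comp R (up_closure S)"
    using peleg_comp_up_closure_left_subset[of R "up_closure S"] by (simp add: up_closed)
  then show "peleg_comp R (up_closure S) = peleg_comp (up_closure R) (up_closure S)"
    by (intro subset_antisym peleg_comp_mono[OF subset_up_closure order_refl])
qed

end
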